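(* Let $\mathcal M$ be a map in class $2_{\{0,1\}}$. Then no two distinct faces of $\mathcal M$ share two consecutive edges (i.e., there is no pair of distinct faces whose boundaries both contain a common path of two edges).
   Context: A map is a $2$-cell embedding of a connected simple graph (its underlying graph) in a closed surface; the components of the complement are the faces. All maps considered are polytopal: flags correspond bijectively to incident triples (vertex, edge, face). For a flag $\Phi$ and $i\in\{0,1,2\}$, $\Phi^i$ is the unique flag differing from $\Phi$ exactly in its vertex ($i=0$), edge ($i=1$) or face ($i=2$). $\mathrm{Aut}(\mathcal M)$ is the group of automorphisms of the underlying graph preserving the set of faces, acting on flags. A map is in class $2_{\{0,1\}}$ if $\mathrm{Aut}(\mathcal M)$ has exactly two orbits on flags and for every flag $\Phi$, the flags $\Phi^0,\Phi^1$ lie in the orbit of $\Phi$ while $\Phi^2$ does not. *)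

theory Defs
  imports Main
begin

text \<open>A polytopal map is encoded combinatorially: vertices V, edges E (2-element
subsets of V, so the underlying graph is simple), abstract faces F, and flags,
which are exactly the incident triples (vertex, edge, face).\<close>

type_synonym ('v, 'f) flag = "'v \<times> 'v set \<times> 'f"

definition fv :: "('v, 'f) flag \<Rightarrow> 'v" where "fv \<Phi> = fst \<Phi>"
definition fe :: "('v, 'f) flag \<Rightarrow> 'v set" where "fe \<Phi> = fst (snd \<Phi>)"
definition ff :: "('v, 'f) flag \<Rightarrow> 'f" where "ff \<Phi> = snd (snd \<Phi>)"

definition differs_exactly :: "nat \<Rightarrow> ('v, 'f) flag \<Rightarrow> ('v, 'f) flag \<Rightarrow> bool" where
  "differs_exactly i \<Phi> \<Psi> \<longleftrightarrow>
     (if i = 0 then fv \<Phi> \<noteq> fv \<Psi> \<and> fe \<Phi> = fe \<Psi> \<and> ff \<Phi> = ff \<Psi>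
      else if i = 1 then fv \<Phi> = fv \<Psi> \<and> fe \<Phi> \<noteq> fe \<Psi> \<and> ff \<Phi> = ff \<Psi>
      else fv \<Phi> = fv \<Psi> \<and> fe \<Phi> = fe \<Psi> \<and> ff \<Phi> \<noteq> ff \<Psi>)"

definition nbr :: "('v, 'f) flag set \<Rightarrow> nat \<Rightarrow> ('v, 'f) flag \<Rightarrow> ('v, 'f) flag" where
  "nbr Fl i \<Phi> = (THE \<Psi>. \<Psi> \<in> Fl \<and> differs_exactly i \<Phi> \<Psi>)"

definition steps :: "('v, 'f) flag set \<Rightarrow> nat set \<Rightarrow> (('v, 'f) flag \<times> ('v, 'f) flag) set" where
  "steps Fl I = {(\<Phi>, nbr Fl i \<Phi>) | \<Phi> i. \<Phi> \<in> Fl \<and> i \<in> I}"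

text \<open>Combinatorial characterisation of a polytopal map on a closed (connected) surface:
finitely many flags, each flag has a unique i-adjacent flag for i = 0,1,2, r0 and r2
commute, the flag graph is connected, and vertices / edges / faces are exactly the
orbits of the subgroups generated by {r1,r2}, {r0,r2}, {r0,r1} respectively.\<close>
definition polytopal_map :: "'v set \<Rightarrow> 'v set set \<Rightarrow> 'f set \<Rightarrow> ('v, 'f) flag set \<Rightarrow> bool" where
  "polytopal_map V E F Fl \<longleftrightarrow>
     finite Fl \<and> Fl \<noteq> {} \<and>
     Fl \<subseteq> V \<times> E \<times> F \<and>
     (\<forall>e\<in>E. e \<subseteq> V \<and> card e = 2) \<and>
     (\<forall>\<Phi>\<in>Fl. fv \<Phi> \<in> fe \<Phi>) \<and>
     fv ` Fl = V \<and> fe ` Fl = E \<and> ff ` Fl = F \<and>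
     (\<forall>\<Phi>\<in>Fl. \<forall>i\<in>{0,1,2}. \<exists>!\<Psi>. \<Psi> \<in> Fl \<and> differs_exactly i \<Phi> \<Psi>) \<and>
     (\<forall>\<Phi>\<in>Fl. nbr Fl 0 (nbr Fl 2 \<Phi>) = nbr Fl 2 (nbr Fl 0 \<Phi>)) \<and>
     (\<forall>\<Phi>\<in>Fl. \<forall>\<Psi>\<in>Fl. (\<Phi>, \<Psi>) \<in> (steps Fl {0,1,2})\<^sup>*) \<and>
     (\<forall>\<Phi>\<in>Fl. \<forall>\<Psi>\<in>Fl. fv \<Phi> = fv \<Psi> \<longrightarrow> (\<Phi>, \<Psi>) \<in> (steps Fl {1,2})\<^sup>*) \<and>
     (\<forall>\<Phi>\<in>Fl. \<forall>\<Psi>\<in>Fl. fe \<Phi> = fe \<Psi> \<longrightarrow> (\<Phi>, \<Psi>) \<in> (steps Fl {0,2})\<^sup>*) \<and>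
     (\<forall>\<Phi>\<in>Fl. \<forall>\<Psi>\<in>Fl. ff \<Phi> = ff \<Psi> \<longrightarrow> (\<Phi>, \<Psi>) \<in> (steps Fl {0,1})\<^sup>*)"

definition is_map_aut :: "'v set \<Rightarrow> 'v set set \<Rightarrow> 'f set \<Rightarrow> ('v, 'f) flag set
    \<Rightarrow> ('v \<Rightarrow> 'v) \<Rightarrow> ('f \<Rightarrow> 'f) \<Rightarrow> bool" where
  "is_map_aut V E F Fl \<sigma> \<tau> \<longleftrightarrow>
     bij_betw \<sigma> V V \<and> bij_betw \<tau> F F \<and>
     (\<forall>e. e \<subseteq> V \<longrightarrow> (e \<in> E \<longleftrightarrow> \<sigma> ` e \<in> E)) \<and>
     (\<forall>v\<in>V. \<forall>e\<in>E. \<forall>f\<in>F. (v, e, f) \<in> Fl \<longleftrightarrow> (\<sigma> v, \<sigma> ` e, \<tau> f) \<in> Fl)"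

definition flag_act :: "('v \<Rightarrow> 'v) \<Rightarrow> ('f \<Rightarrow> 'f) \<Rightarrow> ('v, 'f) flag \<Rightarrow> ('v, 'f) flag" where
  "flag_act \<sigma> \<tau> \<Phi> = (\<sigma> (fv \<Phi>), \<sigma> ` fe \<Phi>, \<tau> (ff \<Phi>))"

definition aut_orbit_rel :: "'v set \<Rightarrow> 'v set set \<Rightarrow> 'f set \<Rightarrow> ('v, 'f) flag set
    \<Rightarrow> (('v, 'f) flag \<times> ('v, 'f) flag) set" where
  "aut_orbit_rel V E F Fl =
     {(\<Phi>, \<Psi>). \<Phi> \<in> Fl \<and> \<Psi> \<in> Fl \<and>
        (\<exists>\<sigma> \<tau>. is_map_aut V E F Fl \<sigma> \<tau> \<and> flag_act \<sigma> \<tau> \<Phi> = \<Psi>)}"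

definition class_2_01 :: "'v set \<Rightarrow> 'v set set \<Rightarrow> 'f set \<Rightarrow> ('v, 'f) flag set \<Rightarrow> bool" where
  "class_2_01 V E F Fl \<longleftrightarrow>
     card (Fl // aut_orbit_rel V E F Fl) = 2 \<and>
     (\<forall>\<Phi>\<in>Fl. (\<Phi>, nbr Fl 0 \<Phi>) \<in> aut_orbit_rel V E F Fl \<and>
              (\<Phi>, nbr Fl 1 \<Phi>) \<in> aut_orbit_rel V E F Fl \<and>
              (\<Phi>, nbr Fl 2 \<Phi>) \<notin> aut_orbit_rel V E F Fl)"

definition face_has_edge :: "('v, 'f) flag set \<Rightarrow> 'f \<Rightarrow> 'v set \<Rightarrow> bool" where
  "face_has_edge Fl f e \<longleftrightarrow> (\<exists>v. (v, e, f) \<in> Fl)"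

end

theory Submission
  imports Defs "HOL-Combinatorics.Transposition"
begin

text \<open>Suppose faces f and g share consecutive edges e1, e2 at a vertex v, and let
\<open>\<Phi> = (v, e1, f)\<close>. Then r1 r2 and r2 r1 agree at \<open>\<Phi>\<close> (both give (v, e2, g)) and at r2 \<open>\<Phi>\<close>.
Automorphisms commute with the ri, and in class 2_{0,1} every flag lies in the orbit of \<open>\<Phi>\<close>
or of r2 \<open>\<Phi>\<close>, so r1 r2 = r2 r1 on all flags. As r0 r2 = r2 r0 holds in any polytopal map,
connectivity of the flag graph forces r2 to swap f and g on every flag. Hence transposing f and g
is a map automorphism taking \<open>\<Phi>\<close> to r2 \<open>\<Phi>\<close>, contradicting the class condition.\<close>

declare fv_def [simp] fe_def [simp] ff_def [simp]

lemma polytopal_map_flags_subset: "polytopal_map V E F Fl \<Longrightarrow> Fl \<subseteq> V \<times> E \<times> F"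
  unfolding polytopal_map_def by (elim conjE)

lemma polytopal_map_edge: "polytopal_map V E F Fl \<Longrightarrow> e \<in> E \<Longrightarrow> e \<subseteq> V \<and> card e = 2"
  unfolding polytopal_map_def by (elim conjE) (erule bspec)

lemma polytopal_map_incident: "polytopal_map V E F Fl \<Longrightarrow> \<Phi> \<in> Fl \<Longrightarrow> fv \<Phi> \<in> fe \<Phi>"
  unfolding polytopal_map_def by (elim conjE) (erule bspec)

lemma polytopal_map_ex1_nbr:
  "polytopal_map V E F Fl \<Longrightarrow> \<Phi> \<in> Fl \<Longrightarrow> i \<in> {0,1,2} \<Longrightarrow> \<exists>!\<Psi>. \<Psi> \<in> Fl \<and> differs_exactly i \<Phi> \<Psi>"
  unfolding polytopal_map_def by (elim conjE) (drule (1) bspec, erule bspec)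

lemma polytopal_map_nbr02_commute:
  "polytopal_map V E F Fl \<Longrightarrow> \<Phi> \<in> Fl \<Longrightarrow> nbr Fl 0 (nbr Fl 2 \<Phi>) = nbr Fl 2 (nbr Fl 0 \<Phi>)"
  unfolding polytopal_map_def by (elim conjE) (erule bspec)

lemma polytopal_map_connected:
  "polytopal_map V E F Fl \<Longrightarrow> \<Phi> \<in> Fl \<Longrightarrow> \<Psi> \<in> Fl \<Longrightarrow> (\<Phi>, \<Psi>) \<in> (steps Fl {0,1,2})\<^sup>*"
  unfolding polytopal_map_def by (elim conjE) (drule (1) bspec, erule bspec)

lemma flag_mem:
  assumes "polytopal_map V E F Fl" "(v, e, h) \<in> Fl"
  shows "v \<in> V" "e \<in> E" "h \<in> F" "e \<subseteq> V"
  using polytopal_map_flags_subset[OF assms(1)] polytopal_map_edge[OF assms(1)] assms(2) by blast+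

lemma
  assumes "polytopal_map V E F Fl" "\<Phi> \<in> Fl" "i \<in> {0,1,2}"
  shows nbr_in_flags: "nbr Fl i \<Phi> \<in> Fl"
    and differs_exactly_nbr: "differs_exactly i \<Phi> (nbr Fl i \<Phi>)"
  using theI'[OF polytopal_map_ex1_nbr[OF assms]] unfolding nbr_def by blast+

lemma nbr_eqI:
  assumes "polytopal_map V E F Fl" "\<Phi> \<in> Fl" "i \<in> {0,1,2}" "\<Psi> \<in> Fl" "differs_exactly i \<Phi> \<Psi>"
  shows "nbr Fl i \<Phi> = \<Psi>"
  unfolding nbr_def using the1_equality[OF polytopal_map_ex1_nbr[OF assms(1-3)]] assms(4,5) by blast

lemma differs_exactly_sym: "differs_exactly i \<Phi> \<Psi> \<Longrightarrow> differs_exactly i \<Psi> \<Phi>"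
  unfolding differs_exactly_def by (auto split: if_splits)

lemma nbr_nbr:
  assumes "polytopal_map V E F Fl" "\<Phi> \<in> Fl" "i \<in> {0,1,2}"
  shows "nbr Fl i (nbr Fl i \<Phi>) = \<Phi>"
  by (meson assms nbr_eqI nbr_in_flags differs_exactly_nbr differs_exactly_sym)

text \<open>Since edges have exactly two ends, the 0-neighbour of a flag supplies the other end.\<close>
lemma flag_change_vertex:
  assumes pm: "polytopal_map V E F Fl" and flag: "(u, e, h) \<in> Fl" and "w \<in> e"
  shows "(w, e, h) \<in> Fl"
proof -
  obtain a where a: "nbr Fl 0 (u, e, h) = (a, e, h)" "a \<noteq> u"
    using differs_exactly_nbr[OF pm flag, of 0] unfolding differs_exactly_def
    by (cases "nbr Fl 0 (u, e, h)") auto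
  have a_flag: "(a, e, h) \<in> Fl"
    using nbr_in_flags[OF pm flag, of 0] a(1) by simp
  have "card e = 2" "u \<in> e" "a \<in> e"
    using polytopal_map_edge[OF pm] polytopal_map_incident[OF pm] flag_mem(2)[OF pm flag] flag a_flag
    by force+
  then have "w = u \<or> w = a"
    using \<open>w \<in> e\<close> a(2) unfolding card_2_iff' by metis
  then show ?thesis using flag a_flag by blast
qed

lemma is_map_aut_flag_iff:
  assumes "is_map_aut V E F Fl \<sigma> \<tau>" "v \<in> V" "e \<in> E" "h \<in> F"
  shows "(v, e, h) \<in> Fl \<longleftrightarrow> (\<sigma> v, \<sigma> ` e, \<tau> h) \<in> Fl"
  using assms unfolding is_map_aut_def by simp

lemma is_map_aut_inj:
  assumes "is_map_aut V E F Fl \<sigma> \<tau>"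
  shows "inj_on \<sigma> V" "inj_on \<tau> F"
  using assms unfolding is_map_aut_def bij_betw_def by simp_all

lemma flag_act_in_flags:
  assumes pm: "polytopal_map V E F Fl" and aut: "is_map_aut V E F Fl \<sigma> \<tau>" and "\<Phi> \<in> Fl"
  shows "flag_act \<sigma> \<tau> \<Phi> \<in> Fl"
proof -
  obtain v e h where \<Phi>: "\<Phi> = (v, e, h)" by (cases \<Phi>)
  with \<open>\<Phi> \<in> Fl\<close> have "(v, e, h) \<in> Fl" by simp
  then show ?thesis
    using is_map_aut_flag_iff[OF aut flag_mem(1-3)[OF pm \<open>(v, e, h) \<in> Fl\<close>]]
    unfolding \<Phi> flag_act_def by simp
qed

lemma nbr_flag_act:
  assumes pm: "polytopal_map V E F Fl" and aut: "is_map_aut V E F Fl \<sigma> \<tau>"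
    and "\<Phi> \<in> Fl" and i: "i \<in> {0,1,2}"
  shows "nbr Fl i (flag_act \<sigma> \<tau> \<Phi>) = flag_act \<sigma> \<tau> (nbr Fl i \<Phi>)"
proof (rule nbr_eqI[OF pm flag_act_in_flags[OF pm aut \<open>\<Phi> \<in> Fl\<close>] i])
  show "flag_act \<sigma> \<tau> (nbr Fl i \<Phi>) \<in> Fl"
    by (rule flag_act_in_flags[OF pm aut nbr_in_flags[OF pm \<open>\<Phi> \<in> Fl\<close> i]])
  obtain v e h where \<Phi>: "\<Phi> = (v, e, h)" by (cases \<Phi>)
  obtain v' e' h' where \<Psi>: "nbr Fl i \<Phi> = (v', e', h')" by (cases "nbr Fl i \<Phi>")
  have "(v', e', h') \<in> Fl" using nbr_in_flags[OF pm \<open>\<Phi> \<in> Fl\<close> i] unfolding \<Psi> .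
  then have mem: "v \<in> V" "e \<subseteq> V" "h \<in> F" "v' \<in> V" "e' \<subseteq> V" "h' \<in> F"
    using flag_mem[OF pm] \<open>\<Phi> \<in> Fl\<close> unfolding \<Phi> by auto
  have "\<sigma> v = \<sigma> v' \<longleftrightarrow> v = v'" "\<sigma> ` e = \<sigma> ` e' \<longleftrightarrow> e = e'" "\<tau> h = \<tau> h' \<longleftrightarrow> h = h'"
    using is_map_aut_inj[OF aut] mem by (simp_all add: inj_on_eq_iff inj_on_image_eq_iff)
  moreover have "differs_exactly i \<Phi> (v', e', h')"
    using differs_exactly_nbr[OF pm \<open>\<Phi> \<in> Fl\<close> i] unfolding \<Psi> .
  ultimately show "differs_exactly i (flag_act \<sigma> \<tau> \<Phi>) (flag_act \<sigma> \<tau> (nbr Fl i \<Phi>))"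
    unfolding \<Psi> unfolding \<Phi> differs_exactly_def flag_act_def by (simp split: if_splits)
qed

lemma aut_orbit_rel_refl:
  assumes "\<Phi> \<in> Fl"
  shows "(\<Phi>, \<Phi>) \<in> aut_orbit_rel V E F Fl"
proof -
  have "is_map_aut V E F Fl id id" "flag_act id id \<Phi> = \<Phi>"
    unfolding is_map_aut_def flag_act_def by (auto simp: prod_eq_iff)
  then show ?thesis using assms unfolding aut_orbit_rel_def by blast
qed

lemma quotient_card_2_cover:
  assumes "card (A // R) = 2" "x \<in> A" "y \<in> A" "z \<in> A"
    and "(x, x) \<in> R" "(z, z) \<in> R" "(y, x) \<notin> R"
  shows "(x, z) \<in> R \<or> (y, z) \<in> R"
proof -
  have classes: "R `` {x} \<in> A // R" "R `` {y} \<in> A // R" "R `` {z} \<in> A // R"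
    using assms(2-4) by (auto intro: quotientI)
  have "R `` {x} \<noteq> R `` {y}" using assms(5,7) by blast
  then have "R `` {z} = R `` {x} \<or> R `` {z} = R `` {y}"
    using assms(1) classes unfolding card_2_iff' by metis
  then show ?thesis using assms(6) by blast
qed

definition nbrs_commute :: "('v, 'f) flag set \<Rightarrow> nat \<Rightarrow> nat \<Rightarrow> ('v, 'f) flag \<Rightarrow> bool" where
  "nbrs_commute Fl i j \<Phi> \<longleftrightarrow> nbr Fl i (nbr Fl j \<Phi>) = nbr Fl j (nbr Fl i \<Phi>)"

lemma nbrs_commute_flag_act:
  assumes pm: "polytopal_map V E F Fl" and aut: "is_map_aut V E F Fl \<sigma> \<tau>" and "\<Phi> \<in> Fl"
    and i: "i \<in> {0,1,2}" and j: "j \<in> {0,1,2}" and "nbrs_commute Fl i j \<Phi>"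
  shows "nbrs_commute Fl i j (flag_act \<sigma> \<tau> \<Phi>)"
  using \<open>nbrs_commute Fl i j \<Phi>\<close>
  unfolding nbrs_commute_def nbr_flag_act[OF pm aut \<open>\<Phi> \<in> Fl\<close> i] nbr_flag_act[OF pm aut \<open>\<Phi> \<in> Fl\<close> j]
    nbr_flag_act[OF pm aut nbr_in_flags[OF pm \<open>\<Phi> \<in> Fl\<close> i] j]
    nbr_flag_act[OF pm aut nbr_in_flags[OF pm \<open>\<Phi> \<in> Fl\<close> j] i]
  by simp

lemma class_2_01_nbrs_commute:
  assumes pm: "polytopal_map V E F Fl" and cls: "class_2_01 V E F Fl"
    and "\<Phi> \<in> Fl" "i \<in> {0,1,2}" "j \<in> {0,1,2}"
    and "nbrs_commute Fl i j \<Phi>" "nbrs_commute Fl i j (nbr Fl 2 \<Phi>)"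
    and "\<Psi> \<in> Fl"
  shows "nbrs_commute Fl i j \<Psi>"
proof -
  let ?R = "aut_orbit_rel V E F Fl"
  have \<Phi>2: "nbr Fl 2 \<Phi> \<in> Fl" using nbr_in_flags[OF pm \<open>\<Phi> \<in> Fl\<close>] by simp
  have "(nbr Fl 2 \<Phi>, nbr Fl 2 (nbr Fl 2 \<Phi>)) \<notin> ?R"
    using cls \<Phi>2 unfolding class_2_01_def by blast
  then have "(nbr Fl 2 \<Phi>, \<Phi>) \<notin> ?R" using nbr_nbr[OF pm \<open>\<Phi> \<in> Fl\<close>] by simp
  then have "(\<Phi>, \<Psi>) \<in> ?R \<or> (nbr Fl 2 \<Phi>, \<Psi>) \<in> ?R"
    using quotient_card_2_cover[of Fl ?R] cls \<open>\<Phi> \<in> Fl\<close> \<Phi>2 \<open>\<Psi> \<in> Fl\<close> aut_orbit_rel_refl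
    unfolding class_2_01_def by blast
  then obtain \<Phi>' \<sigma> \<tau> where "\<Phi>' \<in> Fl" "nbrs_commute Fl i j \<Phi>'"
      "is_map_aut V E F Fl \<sigma> \<tau>" "\<Psi> = flag_act \<sigma> \<tau> \<Phi>'"
    using assms(6,7) unfolding aut_orbit_rel_def by blast
  then show ?thesis using nbrs_commute_flag_act[OF pm] assms(4,5) by blast
qed

definition nbr2_transposes_faces :: "('v, 'f) flag set \<Rightarrow> 'f \<Rightarrow> 'f \<Rightarrow> ('v, 'f) flag \<Rightarrow> bool" where
  "nbr2_transposes_faces Fl f g \<Phi> \<longleftrightarrow>
     ff \<Phi> \<in> {f, g} \<and> nbr Fl 2 \<Phi> = (fv \<Phi>, fe \<Phi>, transpose f g (ff \<Phi>))"

lemma nbr2_transposes_faces_nbr: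
  assumes pm: "polytopal_map V E F Fl" and comm12: "\<forall>\<Psi>\<in>Fl. nbrs_commute Fl 1 2 \<Psi>"
    and "\<Phi> \<in> Fl" and i: "i \<in> {0,1,2}" and "nbr2_transposes_faces Fl f g \<Phi>"
  shows "nbr2_transposes_faces Fl f g (nbr Fl i \<Phi>)"
proof (cases "i = 2")
  case True
  then show ?thesis
    using \<open>nbr2_transposes_faces Fl f g \<Phi>\<close> nbr_nbr[OF pm \<open>\<Phi> \<in> Fl\<close>, of 2]
    unfolding nbr2_transposes_faces_def by (cases \<Phi>) (auto simp: transpose_def)
next
  case False
  then have i01: "i \<in> {0,1}" using i by auto
  have "nbrs_commute Fl i 2 \<Phi>"
    using i01 comm12 \<open>\<Phi> \<in> Fl\<close> polytopal_map_nbr02_commute[OF pm \<open>\<Phi> \<in> Fl\<close>]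
    unfolding nbrs_commute_def by auto
  then have swap: "nbr Fl 2 (nbr Fl i \<Phi>) = nbr Fl i (nbr Fl 2 \<Phi>)"
    unfolding nbrs_commute_def by simp
  let ?\<Psi> = "nbr Fl i \<Phi>"
  have face: "ff \<Phi> \<in> {f, g}" "ff (nbr Fl 2 \<Phi>) = transpose f g (ff \<Phi>)"
    using \<open>nbr2_transposes_faces Fl f g \<Phi>\<close> unfolding nbr2_transposes_faces_def by auto
  have "ff ?\<Psi> = ff \<Phi>"
    using i01 differs_exactly_nbr[OF pm \<open>\<Phi> \<in> Fl\<close> i] unfolding differs_exactly_def by auto
  moreover have "ff (nbr Fl 2 ?\<Psi>) = ff (nbr Fl 2 \<Phi>)"
    using i01 differs_exactly_nbr[OF pm nbr_in_flags[OF pm \<open>\<Phi> \<in> Fl\<close>, of 2] i]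
    unfolding swap differs_exactly_def by auto
  moreover have "fv (nbr Fl 2 ?\<Psi>) = fv ?\<Psi>" "fe (nbr Fl 2 ?\<Psi>) = fe ?\<Psi>"
    using differs_exactly_nbr[OF pm nbr_in_flags[OF pm \<open>\<Phi> \<in> Fl\<close> i], of 2]
    unfolding differs_exactly_def by auto
  ultimately show ?thesis
    using face unfolding nbr2_transposes_faces_def by (simp add: prod_eq_iff)
qed

text \<open>The hypothesis only concerns r1 because r2 commutes with r0 in every polytopal map;
connectivity then spreads the invariant from \<open>\<Phi>\<close> to all flags.\<close>
lemma nbr2_transposes_faces_everywhere:
  assumes pm: "polytopal_map V E F Fl" and comm12: "\<forall>\<Psi>\<in>Fl. nbrs_commute Fl 1 2 \<Psi>"
    and "\<Phi> \<in> Fl" "\<Psi> \<in> Fl"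
  shows "nbr2_transposes_faces Fl (ff \<Phi>) (ff (nbr Fl 2 \<Phi>)) \<Psi>"
proof -
  from polytopal_map_connected[OF pm assms(3,4)] show ?thesis
  proof (induction rule: rtrancl_induct)
    case base
    then show ?case
      unfolding nbr2_transposes_faces_def
      using differs_exactly_nbr[OF pm \<open>\<Phi> \<in> Fl\<close>, of 2] unfolding differs_exactly_def
      by (cases "nbr Fl 2 \<Phi>") auto
  next
    case (step \<Psi>' \<Psi>'')
    then show ?case
      using nbr2_transposes_faces_nbr[OF pm comm12] unfolding steps_def by blast
  qed
qed

lemma is_map_aut_transpose_faces:
  assumes "f \<in> F" "g \<in> F" and swap: "\<And>v e h. (v, e, h) \<in> Fl \<Longrightarrow> (v, e, transpose f g h) \<in> Fl"
  shows "is_map_aut V E F Fl id (transpose f g)"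
  unfolding is_map_aut_def
proof (intro conjI allI impI ballI)
  show "bij_betw (transpose f g) F F" using assms(1,2) by simp
  fix v e h
  show "(v, e, h) \<in> Fl \<longleftrightarrow> (id v, id ` e, transpose f g h) \<in> Fl"
    using swap[of v e h] swap[of v e "transpose f g h"] by auto
qed simp_all

lemma nbr2_in_aut_orbit:
  assumes pm: "polytopal_map V E F Fl" and comm12: "\<forall>\<Psi>\<in>Fl. nbrs_commute Fl 1 2 \<Psi>"
    and "\<Phi> \<in> Fl"
  shows "(\<Phi>, nbr Fl 2 \<Phi>) \<in> aut_orbit_rel V E F Fl"
proof -
  let ?\<tau> = "transpose (ff \<Phi>) (ff (nbr Fl 2 \<Phi>))"
  have \<Phi>2: "nbr Fl 2 \<Phi> \<in> Fl" using nbr_in_flags[OF pm \<open>\<Phi> \<in> Fl\<close>] by simp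
  have transposes: "\<And>\<Psi>. \<Psi> \<in> Fl \<Longrightarrow> nbr Fl 2 \<Psi> = flag_act id ?\<tau> \<Psi>"
    using nbr2_transposes_faces_everywhere[OF pm comm12 \<open>\<Phi> \<in> Fl\<close>]
    unfolding nbr2_transposes_faces_def flag_act_def by simp
  have "(v, e, ?\<tau> h) \<in> Fl" if "(v, e, h) \<in> Fl" for v e h
    using transposes[OF that] nbr_in_flags[OF pm that, of 2] by (simp add: flag_act_def)
  moreover have "ff \<Phi> \<in> F" "ff (nbr Fl 2 \<Phi>) \<in> F"
    using polytopal_map_flags_subset[OF pm] \<open>\<Phi> \<in> Fl\<close> \<Phi>2 by auto
  ultimately have "is_map_aut V E F Fl id ?\<tau>"
    by (intro is_map_aut_transpose_faces)
  then show ?thesis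
    using \<open>\<Phi> \<in> Fl\<close> \<Phi>2 transposes[OF \<open>\<Phi> \<in> Fl\<close>, symmetric] unfolding aut_orbit_rel_def by blast
qed

lemma nbrs_commute_at_shared_corner:
  assumes pm: "polytopal_map V E F Fl" and "e1 \<noteq> e2" "f \<noteq> g"
    and flags: "(v, e1, f) \<in> Fl" "(v, e2, f) \<in> Fl" "(v, e1, g) \<in> Fl" "(v, e2, g) \<in> Fl"
  shows "nbrs_commute Fl 1 2 (v, e1, f)"
proof -
  have "nbr Fl 1 (v, e1, f) = (v, e2, f)" "nbr Fl 2 (v, e1, f) = (v, e1, g)"
    "nbr Fl 1 (v, e1, g) = (v, e2, g)" "nbr Fl 2 (v, e2, f) = (v, e2, g)"
    using nbr_eqI[OF pm] flags assms(2,3) unfolding differs_exactly_def by simp_all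
  then show ?thesis unfolding nbrs_commute_def by simp
qed

theorem corollary2p6:
  fixes V :: "'v set" and E :: "'v set set" and F :: "'f set" and Fl :: "('v, 'f) flag set"
  assumes "polytopal_map V E F Fl"
    and "class_2_01 V E F Fl"
  shows "\<not> (\<exists>f\<in>F. \<exists>g\<in>F. \<exists>e1\<in>E. \<exists>e2\<in>E. f \<noteq> g \<and> e1 \<noteq> e2 \<and> e1 \<inter> e2 \<noteq> {} \<and>
            face_has_edge Fl f e1 \<and> face_has_edge Fl f e2 \<and>
            face_has_edge Fl g e1 \<and> face_has_edge Fl g e2)"
proof
  note pm = assms(1)
  assume "\<exists>f\<in>F. \<exists>g\<in>F. \<exists>e1\<in>E. \<exists>e2\<in>E. f \<noteq> g \<and> e1 \<noteq> e2 \<and> e1 \<inter> e2 \<noteq> {} \<and>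
            face_has_edge Fl f e1 \<and> face_has_edge Fl f e2 \<and>
            face_has_edge Fl g e1 \<and> face_has_edge Fl g e2"
  then obtain f g e1 e2 v where "f \<noteq> g" "e1 \<noteq> e2" "v \<in> e1" "v \<in> e2"
    "face_has_edge Fl f e1" "face_has_edge Fl f e2" "face_has_edge Fl g e1" "face_has_edge Fl g e2"
    by blast
  then have flags: "(v, e1, f) \<in> Fl" "(v, e2, f) \<in> Fl" "(v, e1, g) \<in> Fl" "(v, e2, g) \<in> Fl"
    using flag_change_vertex[OF pm] unfolding face_has_edge_def by blast+
  have "nbr Fl 2 (v, e1, f) = (v, e1, g)"
    using nbr_eqI[OF pm flags(1) _ flags(3)] \<open>f \<noteq> g\<close> unfolding differs_exactly_def by simp
  moreover have "nbrs_commute Fl 1 2 (v, e1, f)" "nbrs_commute Fl 1 2 (v, e1, g)"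
    using nbrs_commute_at_shared_corner[OF pm \<open>e1 \<noteq> e2\<close> \<open>f \<noteq> g\<close> flags]
      nbrs_commute_at_shared_corner[OF pm \<open>e1 \<noteq> e2\<close> \<open>f \<noteq> g\<close>[symmetric] flags(3,4,1,2)] .
  ultimately have "\<forall>\<Psi>\<in>Fl. nbrs_commute Fl 1 2 \<Psi>"
    using class_2_01_nbrs_commute[OF pm assms(2) flags(1)] by simp
  then have "((v, e1, f), nbr Fl 2 (v, e1, f)) \<in> aut_orbit_rel V E F Fl"
    using nbr2_in_aut_orbit[OF pm] flags(1) by blast
  then show False using assms(2) flags(1) unfolding class_2_01_def by blast
qed

end
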